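(* Let $\Gamma$ be a compact tropical curve. There exists $c_\Gamma\in\mathbb{N}$, depending only on $\Gamma$, such that for every $D\in\operatorname{Div}(\Gamma)$, \[ r(D)\ \ge\ \deg(D)-c_\Gamma . \] (One may take $c_\Gamma=2(\#\mathcal{V}(\Gamma)+1)(\#\mathcal{E}(\Gamma)+1)$, where $\mathcal{V}(\Gamma)$ is the finite set of points of valence $\neq 2$ (a single chosen point if $\Gamma$ is a circle) and $\mathcal{E}(\Gamma)$ the set of edges between them.)
   Context: A compact tropical curve $\Gamma$ is a metric graph: obtained from a finite connected multigraph (loops and multiple edges allowed) by identifying each edge $e$ with a real interval $[0,\ell(e)]$, $\ell(e)>0$, glued at the vertices. The valence of a point $x$ is the number of tangent directions at $x$ (a loop through $x$ contributes two). $\operatorname{Div}(\Gamma)$ is the free abelian group on the points of $\Gamma$. $\operatorname{PL}(\Gamma)$ is the set of continuous functions $f:\Gamma\to\mathbb{R}$ which on each edge are piecewise affine with integer slopes and finitely many pieces. For $f\in\operatorname{PL}(\Gamma)$, $\operatorname{div}(f)=\sum_{x\in\Gamma}\big(-\sum_{\zeta}\partial f/\partial\zeta(x)\big)x$, the inner sum over the outgoing tangent directions $\zeta$ at $x$. $D\sim D'$ iff $D-D'=\operatorname{div}(f)$ for some $f\in\operatorname{PL}(\Gamma)$. $|D|=\{D'\ge0: D'\sim D\}$. The Baker--Norine rank is $r(D)=-1$ if $|D|=\varnothing$, otherwise $r(D)=\max\{d: |D-E|\ne\varnothing\text{ for all effective }E\text{ of degree }d\}$. *)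

theory Defs
  imports Complex_Main
begin

text \<open>A compact tropical curve (metric graph) is presented by a finite connected
multigraph (vertex set V, edge set E, endpoint maps src/tgt; loops and multiple
edges allowed) together with positive edge lengths len.  Edge e is identified with
the interval [0, len e], 0 glued to src e and len e glued to tgt e.\<close>

definition tropical_curve ::
  "'v set \<Rightarrow> 'e set \<Rightarrow> ('e \<Rightarrow> 'v) \<Rightarrow> ('e \<Rightarrow> 'v) \<Rightarrow> ('e \<Rightarrow> real) \<Rightarrow> bool" where
  "tropical_curve V E src tgt len \<longleftrightarrow>
     finite V \<and> finite E \<and> V \<noteq> {} \<and>
     (\<forall>e\<in>E. src e \<in> V \<and> tgt e \<in> V \<and> len e > 0) \<and>
     (\<forall>u\<in>V. \<forall>w\<in>V. (u, w) \<in> ({(src e, tgt e) | e. e \<in> E} \<union> {(tgt e, src e) | e. e \<in> E})\<^sup>*)"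

datatype ('v, 'e) pt = Vert 'v | Inner 'e real

definition points :: "'v set \<Rightarrow> 'e set \<Rightarrow> ('e \<Rightarrow> real) \<Rightarrow> ('v, 'e) pt set" where
  "points V E len = Vert ` V \<union> {Inner e t | e t. e \<in> E \<and> 0 < t \<and> t < len e}"

definition emb :: "('e \<Rightarrow> 'v) \<Rightarrow> ('e \<Rightarrow> 'v) \<Rightarrow> ('e \<Rightarrow> real) \<Rightarrow> 'e \<Rightarrow> real \<Rightarrow> ('v, 'e) pt" where
  "emb src tgt len e t = (if t = 0 then Vert (src e) else if t = len e then Vert (tgt e) else Inner e t)"

text \<open>Piecewise affine with integer slopes and finitely many pieces on [0, l]
(this includes continuity on [0, l]).\<close>
definition pw_affine_int :: "real \<Rightarrow> (real \<Rightarrow> real) \<Rightarrow> bool" where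
  "pw_affine_int l g \<longleftrightarrow>
     (\<exists>xs :: real list. length xs \<ge> 2 \<and> sorted_wrt (<) xs \<and> hd xs = 0 \<and> last xs = l \<and>
        (\<forall>i < length xs - 1. \<exists>m :: int. \<exists>b :: real.
            \<forall>t \<in> {xs ! i .. xs ! (i+1)}. g t = of_int m * t + b))"

text \<open>PL(\<Gamma>): restriction to every closed edge is continuous piecewise affine with
integer slopes (continuity on \<Gamma> follows since \<Gamma> is a finite union of closed edges).\<close>
definition is_PL ::
  "'e set \<Rightarrow> ('e \<Rightarrow> 'v) \<Rightarrow> ('e \<Rightarrow> 'v) \<Rightarrow> ('e \<Rightarrow> real) \<Rightarrow> (('v, 'e) pt \<Rightarrow> real) \<Rightarrow> bool" where
  "is_PL E src tgt len f \<longleftrightarrow> (\<forall>e\<in>E. pw_affine_int (len e) (\<lambda>t. f (emb src tgt len e t)))"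

definition slope_pos :: "(real \<Rightarrow> real) \<Rightarrow> real \<Rightarrow> real" where
  "slope_pos g t = Lim (at_right 0) (\<lambda>h. (g (t + h) - g t) / h)"

definition slope_neg :: "(real \<Rightarrow> real) \<Rightarrow> real \<Rightarrow> real" where
  "slope_neg g t = Lim (at_right 0) (\<lambda>h. (g (t - h) - g t) / h)"

text \<open>div(f)(x) = - (sum of outgoing slopes at x); a loop contributes two directions.\<close>
definition divf ::
  "'v set \<Rightarrow> 'e set \<Rightarrow> ('e \<Rightarrow> 'v) \<Rightarrow> ('e \<Rightarrow> 'v) \<Rightarrow> ('e \<Rightarrow> real) \<Rightarrow> (('v, 'e) pt \<Rightarrow> real)
     \<Rightarrow> ('v, 'e) pt \<Rightarrow> real" where
  "divf V E src tgt len f x =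
     (if x \<notin> points V E len then 0 else
      (case x of
         Vert v \<Rightarrow> - ((\<Sum>e\<in>{e\<in>E. src e = v}. slope_pos (\<lambda>t. f (emb src tgt len e t)) 0)
                     + (\<Sum>e\<in>{e\<in>E. tgt e = v}. slope_neg (\<lambda>t. f (emb src tgt len e t)) (len e)))
       | Inner e t \<Rightarrow> - (slope_pos (\<lambda>s. f (emb src tgt len e s)) t
                       + slope_neg (\<lambda>s. f (emb src tgt len e s)) t)))"

definition is_divisor :: "'v set \<Rightarrow> 'e set \<Rightarrow> ('e \<Rightarrow> real) \<Rightarrow> (('v, 'e) pt \<Rightarrow> int) \<Rightarrow> bool" where
  "is_divisor V E len D \<longleftrightarrow> finite {x. D x \<noteq> 0} \<and> {x. D x \<noteq> 0} \<subseteq> points V E len"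

definition deg :: "('a \<Rightarrow> int) \<Rightarrow> int" where
  "deg D = (\<Sum>x\<in>{x. D x \<noteq> 0}. D x)"

definition effective :: "('a \<Rightarrow> int) \<Rightarrow> bool" where
  "effective D \<longleftrightarrow> (\<forall>x. D x \<ge> 0)"

definition lin_equiv ::
  "'v set \<Rightarrow> 'e set \<Rightarrow> ('e \<Rightarrow> 'v) \<Rightarrow> ('e \<Rightarrow> 'v) \<Rightarrow> ('e \<Rightarrow> real)
     \<Rightarrow> (('v, 'e) pt \<Rightarrow> int) \<Rightarrow> (('v, 'e) pt \<Rightarrow> int) \<Rightarrow> bool" where
  "lin_equiv V E src tgt len D D' \<longleftrightarrow>
     (\<exists>f. is_PL E src tgt len f \<and>
          (\<forall>x\<in>points V E len. real_of_int (D x - D' x) = divf V E src tgt len f x))"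

definition linsys_nonempty ::
  "'v set \<Rightarrow> 'e set \<Rightarrow> ('e \<Rightarrow> 'v) \<Rightarrow> ('e \<Rightarrow> 'v) \<Rightarrow> ('e \<Rightarrow> real) \<Rightarrow> (('v, 'e) pt \<Rightarrow> int) \<Rightarrow> bool" where
  "linsys_nonempty V E src tgt len D \<longleftrightarrow>
     (\<exists>D'. is_divisor V E len D' \<and> effective D' \<and> lin_equiv V E src tgt len D' D)"

definition BN_rank ::
  "'v set \<Rightarrow> 'e set \<Rightarrow> ('e \<Rightarrow> 'v) \<Rightarrow> ('e \<Rightarrow> 'v) \<Rightarrow> ('e \<Rightarrow> real) \<Rightarrow> (('v, 'e) pt \<Rightarrow> int) \<Rightarrow> int" where
  "BN_rank V E src tgt len D =
     (if \<not> linsys_nonempty V E src tgt len D then -1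
      else int (GREATEST d :: nat. \<forall>F. is_divisor V E len F \<and> effective F \<and> deg F = int d
                 \<longrightarrow> linsys_nonempty V E src tgt len (\<lambda>x. D x - F x)))"

end

theory Submission
  imports Defs
begin

(* Linear equivalence preserves the degree: along every edge, the outgoing slopes of a piecewise
affine function at the two ends and its kinks in between add up to zero. Hence
r(D) >= deg D - 2|E| as soon as every divisor of degree at least 2|E| is equivalent to an
effective one.

For such a divisor D, choose vertex values h solving a Laplace equation on the graph with
conductances 1/len e (solvable since the graph is connected and the data sum to zero), so that
the real slopes q e = (h (tgt e) - h (src e) - m e) / len e, with m e the moment of the chips of D
on e about tgt e, have a prescribed net inflow at each vertex. On each edge take the ramp that
leaves h (src e) with the integer slope ceil (q e), absorbs the chips of D on e and bends down
once more at frac (q e) * len e: it arrives exactly at h (tgt e). The equivalent divisor obtained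
keeps at most one chip inside each edge, and rounding q e costs at most one chip at each end of
each edge; the prescribed inflow pays for this out of the surplus deg D - 2|E|. *)

section \<open>Slopes and kinks of piecewise affine functions\<close>

definition kink :: "(real \<Rightarrow> real) \<Rightarrow> real \<Rightarrow> real" where
  "kink g t = slope_pos g t + slope_neg g t"

lemma slope_pos_affine:
  assumes "t < b" and "\<forall>s\<in>{t..b}. g s = m * s + c"
  shows "slope_pos g t = m"
proof -
  have "eventually (\<lambda>h. h \<in> {0<..<b - t}) (at_right (0::real))"
    using assms(1) eventually_at_right_real by simp
  then have "eventually (\<lambda>h. (g (t + h) - g t) / h = m) (at_right 0)"
    by eventually_elim (use assms(2) in \<open>auto simp: field_simps\<close>)
  then show ?thesis
    unfolding slope_pos_def by (intro tendsto_Lim) (auto intro: tendsto_eventually)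
qed

lemma slope_neg_affine:
  assumes "a < t" and "\<forall>s\<in>{a..t}. g s = m * s + c"
  shows "slope_neg g t = - m"
proof -
  have "eventually (\<lambda>h. h \<in> {0<..<t - a}) (at_right (0::real))"
    using assms(1) eventually_at_right_real by simp
  then have "eventually (\<lambda>h. (g (t - h) - g t) / h = - m) (at_right 0)"
    by eventually_elim (use assms(2) in \<open>auto simp: field_simps\<close>)
  then show ?thesis
    unfolding slope_neg_def by (intro tendsto_Lim) (auto intro: tendsto_eventually)
qed

lemma kink_affine:
  assumes "a < t" "t < b" and "\<forall>s\<in>{a..b}. g s = m * s + c"
  shows "kink g t = 0"
  using slope_pos_affine[of t b g m c] slope_neg_affine[of a t g m c] assms
  by (simp add: kink_def)

lemma strict_mono_on_interval_cover:
  fixes x :: "nat \<Rightarrow> real"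
  assumes "strict_mono_on {..n} x" "x 0 \<le> t" "t < x n"
  shows "\<exists>i<n. x i \<le> t \<and> t < x (Suc i)"
  using assms
proof (induction n)
  case 0
  then show ?case by simp
next
  case (Suc n)
  show ?case
  proof (cases "t < x n")
    case True
    have "strict_mono_on {..n} x"
      using Suc.prems(1) by (rule monotone_on_subset) auto
    then show ?thesis using Suc.IH Suc.prems True less_SucI by blast
  next
    case False
    then show ?thesis using Suc.prems by auto
  qed
qed

lemma pw_affine_intE:
  assumes "pw_affine_int l g"
  obtains n :: nat and x :: "nat \<Rightarrow> real" and m :: "nat \<Rightarrow> int" and c :: "nat \<Rightarrow> real"
  where "0 < n" "x 0 = 0" "x n = l" "strict_mono_on {..n} x"
    "\<And>i t. i < n \<Longrightarrow> x i \<le> t \<Longrightarrow> t \<le> x (Suc i) \<Longrightarrow> g t = of_int (m i) * t + c i"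
proof -
  obtain xs :: "real list" where len: "length xs \<ge> 2" and sorted: "sorted_wrt (<) xs"
    and hd: "hd xs = 0" and last: "last xs = l"
    and pieces: "\<forall>i < length xs - 1. \<exists>m :: int. \<exists>c :: real.
                   \<forall>t \<in> {xs ! i .. xs ! (i+1)}. g t = of_int m * t + c"
    using assms unfolding pw_affine_int_def by blast
  define n where "n = length xs - 1"
  obtain m c where mc: "\<And>i t. i < n \<Longrightarrow> t \<in> {xs ! i .. xs ! (i+1)} \<Longrightarrow> g t = of_int (m i) * t + c i"
    using pieces unfolding n_def by metis
  show thesis
  proof (rule that[of n "(!) xs" m c])
    have "xs \<noteq> []" using len by auto
    then show "0 < n" "xs ! 0 = 0" "xs ! n = l"
      using len hd last by (auto simp: n_def hd_conv_nth last_conv_nth)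
    show "strict_mono_on {..n} ((!) xs)"
      using sorted len by (auto simp: n_def strict_mono_on_def sorted_wrt_nth_less)
  qed (use mc in auto)
qed

lemma kink_eq_0_between_breakpoints:
  fixes x :: "nat \<Rightarrow> real"
  assumes mono: "strict_mono_on {..n} x"
    and piece: "\<And>i t. i < n \<Longrightarrow> x i \<le> t \<Longrightarrow> t \<le> x (Suc i) \<Longrightarrow> g t = m i * t + c i"
    and t: "x 0 < t" "t < x n" "t \<notin> x ` {..n}"
  shows "kink g t = 0"
proof -
  obtain i where i: "i < n" "x i \<le> t" "t < x (Suc i)"
    using strict_mono_on_interval_cover[OF mono, of t] t by auto
  moreover have "x i \<noteq> t"
    using i t(3) by auto
  ultimately show ?thesis
    using piece by (intro kink_affine[where a = "x i" and b = "x (Suc i)" and c = "c i"]) auto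
qed

lemma piecewise_affine_kink_sum:
  fixes x :: "nat \<Rightarrow> real"
  assumes "0 < n" and mono: "strict_mono_on {..n} x"
    and piece: "\<And>i t. i < n \<Longrightarrow> x i \<le> t \<Longrightarrow> t \<le> x (Suc i) \<Longrightarrow> g t = m i * t + c i"
  shows "slope_pos g (x 0) + slope_neg g (x n) + (\<Sum>i = 1..<n. kink g (x i)) = 0"
proof -
  have step: "x i < x (Suc i)" if "i < n" for i
    using mono that by (auto simp: monotone_on_def)
  have right: "slope_pos g (x i) = m i" if "i < n" for i
    using that step piece by (intro slope_pos_affine[where b = "x (Suc i)" and c = "c i"]) auto
  have left: "slope_neg g (x (Suc i)) = - m i" if "i < n" for i
    using that step piece by (intro slope_neg_affine[where a = "x i" and c = "c i"]) auto
  obtain n' where n': "n = Suc n'" using \<open>0 < n\<close> not0_implies_Suc by blast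
  have "(\<Sum>i = 1..<n. kink g (x i)) = (\<Sum>j = 0..<n'. m (Suc j) - m j)"
    unfolding n' One_nat_def sum.shift_bounds_Suc_ivl
    by (intro sum.cong) (use right left n' in \<open>auto simp: kink_def\<close>)
  also have "\<dots> = m n' - m 0"
    by (rule sum_Suc_diff') simp
  finally show ?thesis
    using right[of 0] left[of n'] n' by simp
qed

lemma pw_affine_int_kink_sum:
  assumes pw: "pw_affine_int l g" and T: "finite T" "T \<subseteq> {0<..<l}"
    and kinks_in_T: "\<And>t. 0 < t \<Longrightarrow> t < l \<Longrightarrow> kink g t \<noteq> 0 \<Longrightarrow> t \<in> T"
  shows "slope_pos g 0 + slope_neg g l + (\<Sum>t\<in>T. kink g t) = 0"
proof -
  obtain n x m c where n: "0 < n" and x0: "x 0 = 0" and xn: "x n = l"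
    and mono: "strict_mono_on {..n} x"
    and piece: "\<And>i t. i < n \<Longrightarrow> x i \<le> t \<Longrightarrow> t \<le> x (Suc i) \<Longrightarrow> g t = of_int (m i) * t + c i"
    using pw_affine_intE[OF pw] by blast
  define X where "X = x ` {1..<n}"
  have "finite X" by (simp add: X_def)
  have X_sub: "X \<subseteq> {0<..<l}"
  proof
    fix t assume "t \<in> X"
    then obtain i where i: "i \<in> {1..<n}" "t = x i" unfolding X_def by blast
    have "x 0 < x i" "x i < x n"
      using mono i by (auto simp: monotone_on_def)
    then show "t \<in> {0<..<l}"
      using i x0 xn by simp
  qed
  have off_X: "kink g t = 0" if t: "0 < t" "t < l" "t \<notin> X" for t
  proof (rule kink_eq_0_between_breakpoints[OF mono piece])
    show "t \<notin> x ` {..n}"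
    proof
      assume "t \<in> x ` {..n}"
      then obtain i where i: "i \<le> n" "t = x i" by auto
      moreover have "i \<noteq> 0" using i(2) t(1) x0 by (cases i) auto
      moreover have "i \<noteq> n" using i(2) t(2) xn by auto
      ultimately show False using t(3) by (auto simp: X_def)
    qed
  qed (use t x0 xn in auto)
  have "(\<Sum>t\<in>T. kink g t) = (\<Sum>t\<in>T \<union> X. kink g t)"
    using T \<open>finite X\<close> X_sub kinks_in_T by (intro sum.mono_neutral_left) force+
  also have "\<dots> = (\<Sum>t\<in>X. kink g t)"
    using T \<open>finite X\<close> off_X by (intro sum.mono_neutral_right) auto
  also have "\<dots> = (\<Sum>i = 1..<n. kink g (x i))"
    unfolding X_def using strict_mono_on_imp_inj_on[OF mono]
    by (subst sum.reindex) (auto elim: inj_on_subset)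
  finally show ?thesis
    using piecewise_affine_kink_sum[OF n mono piece] x0 xn by simp
qed

lemma slope_pos_cong:
  assumes "t < b" and "\<forall>s\<in>{t..b}. g s = g' s"
  shows "slope_pos g t = slope_pos g' t"
proof -
  have "eventually (\<lambda>h. h \<in> {0<..<b - t}) (at_right (0::real))"
    using assms(1) eventually_at_right_real by simp
  then have "eventually (\<lambda>h. (g (t + h) - g t) / h = (g' (t + h) - g' t) / h) (at_right 0)"
    by eventually_elim (use assms(2) in auto)
  then show ?thesis
    unfolding slope_pos_def by (rule Lim_cong) simp
qed

lemma slope_neg_cong:
  assumes "a < t" and "\<forall>s\<in>{a..t}. g s = g' s"
  shows "slope_neg g t = slope_neg g' t"
proof -
  have "eventually (\<lambda>h. h \<in> {0<..<t - a}) (at_right (0::real))"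
    using assms(1) eventually_at_right_real by simp
  then have "eventually (\<lambda>h. (g (t - h) - g t) / h = (g' (t - h) - g' t) / h) (at_right 0)"
    by eventually_elim (use assms(2) in auto)
  then show ?thesis
    unfolding slope_neg_def by (rule Lim_cong) simp
qed

lemma last_sorted_list_of_set:
  fixes S :: "'a::linorder set"
  assumes "finite S" "S \<noteq> {}"
  shows "last (sorted_list_of_set S) = Max S"
proof -
  define xs where "xs = sorted_list_of_set S"
  have "xs \<noteq> []" "set xs = S" using assms by (simp_all add: xs_def)
  show ?thesis
    unfolding xs_def[symmetric]
  proof (rule Max_eqI[symmetric])
    show "last xs \<in> S" using \<open>xs \<noteq> []\<close> \<open>set xs = S\<close> by auto
    fix y assume "y \<in> S"
    then obtain j where "j < length xs" "xs ! j = y" using \<open>set xs = S\<close> by (metis in_set_conv_nth)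
    moreover have "sorted xs" by (simp add: xs_def)
    ultimately show "y \<le> last xs"
      using \<open>xs \<noteq> []\<close> sorted_nth_mono[of xs j "length xs - 1"] by (simp add: last_conv_nth)
  qed (use assms in auto)
qed

lemma pw_affine_int_if_affine_between:
  assumes S: "finite S" "0 \<in> S" "l \<in> S" "S \<subseteq> {0..l}" and "0 < l"
    and affine: "\<And>a b. a \<in> S \<Longrightarrow> b \<in> S \<Longrightarrow> a < b \<Longrightarrow> (\<And>s. s \<in> S \<Longrightarrow> s \<le> a \<or> b \<le> s)
                   \<Longrightarrow> \<exists>m::int. \<exists>c. \<forall>t\<in>{a..b}. g t = of_int m * t + c"
  shows "pw_affine_int l g"
proof -
  define xs where "xs = sorted_list_of_set S"
  have set_xs: "set xs = S" and strict: "sorted_wrt (<) xs"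
    using S by (simp_all add: xs_def strict_sorted_list_of_set)
  have mono: "xs ! i \<le> xs ! j" if "i \<le> j" "j < length xs" for i j
    unfolding xs_def by (rule sorted_nth_mono[OF sorted_sorted_list_of_set]) (use that xs_def in auto)
  have "card {0, l} \<le> card S"
    using S by (intro card_mono) auto
  then have len: "2 \<le> length xs"
    using \<open>0 < l\<close> S by (simp add: xs_def)
  have "Min S = 0" using S by (intro Min_eqI) auto
  moreover have "Max S = l" using S by (intro Max_eqI) auto
  moreover have "S \<noteq> {}" using S by auto
  moreover have "hd xs = Min S"
    unfolding xs_def sorted_list_of_set_nonempty[OF S(1) \<open>S \<noteq> {}\<close>] by simp
  ultimately have hd: "hd xs = 0" and last: "last xs = l"
    using S by (simp_all add: xs_def last_sorted_list_of_set)
  have "\<exists>m::int. \<exists>c. \<forall>t\<in>{xs ! i..xs ! (i + 1)}. g t = of_int m * t + c"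
    if i: "i < length xs - 1" for i
  proof (rule affine)
    show "xs ! i \<in> S" "xs ! (i + 1) \<in> S" using i set_xs by auto
    show "xs ! i < xs ! (i + 1)" using i strict by (simp add: sorted_wrt_nth_less)
    fix s assume "s \<in> S"
    then obtain j where "j < length xs" "xs ! j = s" using set_xs by (metis in_set_conv_nth)
    then show "s \<le> xs ! i \<or> xs ! (i + 1) \<le> s"
      using mono[of j i] mono[of "i + 1" j] i by (cases "j \<le> i") auto
  qed
  then show ?thesis
    unfolding pw_affine_int_def using len strict hd last by blast
qed

section \<open>Degree is invariant under linear equivalence\<close>

lemma deg_superset:
  assumes "finite S" "{x. D x \<noteq> 0} \<subseteq> S"
  shows "deg D = (\<Sum>x\<in>S. D x)"
  unfolding deg_def using assms by (intro sum.mono_neutral_left) auto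

lemma deg_diff:
  assumes "finite {x. D x \<noteq> 0}" "finite {x. F x \<noteq> 0}"
  shows "deg (\<lambda>x. D x - F x) = deg D - deg F"
proof -
  define S where "S = {x. D x \<noteq> 0} \<union> {x. F x \<noteq> 0}"
  have "finite S" using assms by (simp add: S_def)
  then have "deg (\<lambda>x. D x - F x) = (\<Sum>x\<in>S. D x) - (\<Sum>x\<in>S. F x)"
    by (subst deg_superset[of S]) (auto simp: S_def sum_subtractf)
  also have "\<dots> = deg D - deg F"
    using \<open>finite S\<close> by (simp add: deg_superset[of S] S_def)
  finally show ?thesis .
qed

lemma deg_single: "deg (\<lambda>x. if x = a then n else 0) = n"
  by (subst deg_superset[of "{a}"]) auto

lemma deg_nonneg: "effective D \<Longrightarrow> 0 \<le> deg D"
  unfolding deg_def effective_def by (intro sum_nonneg) auto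

lemma is_divisor_diff:
  assumes "is_divisor V E len D" "is_divisor V E len F"
  shows "is_divisor V E len (\<lambda>x. D x - F x)"
proof -
  have "{x. D x - F x \<noteq> 0} \<subseteq> {x. D x \<noteq> 0} \<union> {x. F x \<noteq> 0}" by auto
  then show ?thesis
    using assms unfolding is_divisor_def by (auto intro: finite_subset)
qed

lemma finite_support_Inner:
  "finite {x. D x \<noteq> 0} \<Longrightarrow> finite {t. D (Inner e t) \<noteq> 0}"
  using finite_vimageI[of "{x. D x \<noteq> 0}" "Inner e"] by (simp add: inj_def vimage_def)

lemma Vert_in_points [simp]: "Vert v \<in> points V E len \<longleftrightarrow> v \<in> V"
  by (auto simp: points_def)

lemma Inner_in_points [simp]: "Inner e t \<in> points V E len \<longleftrightarrow> e \<in> E \<and> 0 < t \<and> t < len e"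
  by (auto simp: points_def)

locale metric_graph =
  fixes V :: "'v set" and E :: "'e set" and src tgt :: "'e \<Rightarrow> 'v" and len :: "'e \<Rightarrow> real"
  assumes finite_V: "finite V" and finite_E: "finite E"
    and src_in_V: "e \<in> E \<Longrightarrow> src e \<in> V" and tgt_in_V: "e \<in> E \<Longrightarrow> tgt e \<in> V"
    and len_pos: "e \<in> E \<Longrightarrow> 0 < len e"
begin

lemma sum_over_src: "(\<Sum>v\<in>V. \<Sum>e\<in>{e\<in>E. src e = v}. h e) = (\<Sum>e\<in>E. h e)"
  using sum.group[of E V src h] finite_V finite_E src_in_V by auto

lemma sum_over_tgt: "(\<Sum>v\<in>V. \<Sum>e\<in>{e\<in>E. tgt e = v}. h e) = (\<Sum>e\<in>E. h e)"
  using sum.group[of E V tgt h] finite_V finite_E tgt_in_V by auto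

lemma deg_split:
  assumes "is_divisor V E len D"
  shows "deg D = (\<Sum>v\<in>V. D (Vert v)) + (\<Sum>e\<in>E. deg (\<lambda>t. D (Inner e t)))"
proof -
  define S where "S e = {t. D (Inner e t) \<noteq> 0}" for e
  have fin_S: "finite (S e)" for e
    using assms finite_support_Inner by (auto simp: S_def is_divisor_def)
  define A :: "('v, 'e) pt set" where "A = Vert ` V"
  define B :: "('v, 'e) pt set" where "B = (\<Union>e\<in>E. Inner e ` S e)"
  have "{x. D x \<noteq> 0} \<subseteq> A \<union> B"
  proof
    fix x assume x: "x \<in> {x. D x \<noteq> 0}"
    then have "x \<in> points V E len" using assms by (auto simp: is_divisor_def)
    then show "x \<in> A \<union> B"
      using x by (cases x) (auto simp: A_def B_def S_def)
  qed
  moreover have "finite A" "finite B"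
    using finite_V finite_E fin_S by (auto simp: A_def B_def)
  ultimately have "deg D = (\<Sum>x\<in>A. D x) + (\<Sum>x\<in>B. D x)"
    by (subst deg_superset[of "A \<union> B"]) (auto intro: sum.union_disjoint simp: A_def B_def)
  also have "(\<Sum>x\<in>A. D x) = (\<Sum>v\<in>V. D (Vert v))"
    unfolding A_def by (subst sum.reindex) (auto simp: inj_on_def)
  also have "(\<Sum>x\<in>B. D x) = (\<Sum>e\<in>E. \<Sum>t\<in>S e. D (Inner e t))"
    unfolding B_def using finite_E fin_S
    by (subst sum.UNION_disjoint) (auto simp: sum.reindex inj_on_def)
  also have "\<dots> = (\<Sum>e\<in>E. deg (\<lambda>t. D (Inner e t)))"
    by (simp add: deg_def S_def)
  finally show ?thesis .
qed

lemma deg_principal_divisor: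
  assumes D: "is_divisor V E len D" and f: "is_PL E src tgt len f"
    and div_f: "\<And>x. x \<in> points V E len \<Longrightarrow> real_of_int (D x) = divf V E src tgt len f x"
  shows "deg D = 0"
proof -
  define g where "g e = (\<lambda>t. f (emb src tgt len e t))" for e
  have vertex: "real_of_int (D (Vert v)) =
      - ((\<Sum>e\<in>{e\<in>E. src e = v}. slope_pos (g e) 0) + (\<Sum>e\<in>{e\<in>E. tgt e = v}. slope_neg (g e) (len e)))"
    if "v \<in> V" for v
    using div_f[of "Vert v"] that by (simp add: divf_def g_def)
  have edge: "real_of_int (deg (\<lambda>t. D (Inner e t))) = slope_pos (g e) 0 + slope_neg (g e) (len e)"
    if e: "e \<in> E" for e
  proof -
    define T where "T = {t. D (Inner e t) \<noteq> 0}"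
    have T: "finite T" "T \<subseteq> {0<..<len e}"
      using D e finite_support_Inner by (force simp: T_def is_divisor_def)+
    have kink: "real_of_int (D (Inner e t)) = - kink (g e) t" if "0 < t" "t < len e" for t
      using div_f[of "Inner e t"] e that by (simp add: divf_def g_def kink_def)
    have "pw_affine_int (len e) (g e)"
      using f e by (simp add: is_PL_def g_def)
    then have "slope_pos (g e) 0 + slope_neg (g e) (len e) + (\<Sum>t\<in>T. kink (g e) t) = 0"
      using T by (rule pw_affine_int_kink_sum) (use kink in \<open>force simp: T_def\<close>)
    moreover have "real_of_int (deg (\<lambda>t. D (Inner e t))) = - (\<Sum>t\<in>T. kink (g e) t)"
      unfolding deg_def T_def of_int_sum sum_negf[symmetric]
      by (rule sum.cong) (use T kink in \<open>auto simp: T_def\<close>)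
    ultimately show ?thesis by linarith
  qed
  have "real_of_int (deg D) = (\<Sum>v\<in>V. real_of_int (D (Vert v))) + (\<Sum>e\<in>E. real_of_int (deg (\<lambda>t. D (Inner e t))))"
    using deg_split[OF D] by simp
  also have "\<dots> = 0"
    using vertex edge by (simp add: sum.distrib sum_subtractf sum_negf sum_over_src sum_over_tgt)
  finally show ?thesis by simp
qed

lemma deg_lin_equiv:
  assumes "is_divisor V E len D" "is_divisor V E len D'" "lin_equiv V E src tgt len D D'"
  shows "deg D = deg D'"
proof -
  obtain f where "is_PL E src tgt len f"
    "\<forall>x\<in>points V E len. real_of_int (D x - D' x) = divf V E src tgt len f x"
    using assms(3) unfolding lin_equiv_def by blast
  then have "deg (\<lambda>x. D x - D' x) = 0"
    using assms(1,2) by (intro deg_principal_divisor is_divisor_diff) auto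
  then show ?thesis
    using assms(1,2) by (simp add: deg_diff is_divisor_def)
qed

lemma deg_nonneg_if_linsys_nonempty:
  assumes "is_divisor V E len D" "linsys_nonempty V E src tgt len D"
  shows "0 \<le> deg D"
proof -
  obtain D' where "is_divisor V E len D'" "effective D'" "lin_equiv V E src tgt len D' D"
    using assms(2) unfolding linsys_nonempty_def by blast
  then show ?thesis
    using assms(1) deg_lin_equiv deg_nonneg by metis
qed

end

section \<open>Ramps\<close>

definition ramp :: "real \<Rightarrow> int \<Rightarrow> (real \<Rightarrow> int) \<Rightarrow> real \<Rightarrow> real" where
  "ramp c \<sigma> \<kappa> t = c + of_int \<sigma> * t + (\<Sum>p | \<kappa> p \<noteq> 0. of_int (\<kappa> p) * max 0 (t - p))"

lemma ramp_affine_between: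
  assumes fin: "finite {p. \<kappa> p \<noteq> 0}" and gap: "\<And>p. \<kappa> p \<noteq> 0 \<Longrightarrow> p \<le> a \<or> b \<le> p"
    and s: "a \<le> s" "s \<le> b"
  shows "ramp c \<sigma> \<kappa> s = (of_int \<sigma> + (\<Sum>p | \<kappa> p \<noteq> 0 \<and> p \<le> a. of_int (\<kappa> p))) * s
           + (c - (\<Sum>p | \<kappa> p \<noteq> 0 \<and> p \<le> a. of_int (\<kappa> p) * p))"
proof -
  have "(\<Sum>p | \<kappa> p \<noteq> 0. of_int (\<kappa> p) * max 0 (s - p))
      = (\<Sum>p | \<kappa> p \<noteq> 0. if p \<le> a then of_int (\<kappa> p) * (s - p) else 0)"
    using gap s by (intro sum.cong) force+
  also have "\<dots> = (\<Sum>p \<in> {p \<in> {p. \<kappa> p \<noteq> 0}. p \<le> a}. of_int (\<kappa> p) * (s - p))"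
    using fin by (rule sum.inter_filter[symmetric])
  finally show ?thesis
    by (simp add: ramp_def algebra_simps sum_subtractf sum_distrib_left sum_distrib_right)
qed

lemma slope_pos_ramp:
  assumes fin: "finite {p. \<kappa> p \<noteq> 0}"
  shows "slope_pos (ramp c \<sigma> \<kappa>) t = of_int \<sigma> + (\<Sum>p | \<kappa> p \<noteq> 0 \<and> p \<le> t. of_int (\<kappa> p))"
proof -
  define Q where "Q = insert (t + 1) {p. \<kappa> p \<noteq> 0 \<and> t < p}"
  have Q: "finite Q" "Q \<noteq> {}" using fin by (auto simp: Q_def)
  have "t < Min Q" using Q by (auto simp: Q_def)
  moreover have "p \<le> t \<or> Min Q \<le> p" if "\<kappa> p \<noteq> 0" for p
    using Q that by (cases "t < p") (auto simp: Q_def)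
  ultimately have "\<forall>s\<in>{t..Min Q}. ramp c \<sigma> \<kappa> s
      = (of_int \<sigma> + (\<Sum>p | \<kappa> p \<noteq> 0 \<and> p \<le> t. of_int (\<kappa> p))) * s
        + (c - (\<Sum>p | \<kappa> p \<noteq> 0 \<and> p \<le> t. of_int (\<kappa> p) * p))"
    using fin by (intro ballI ramp_affine_between) auto
  then show ?thesis
    by (rule slope_pos_affine[OF \<open>t < Min Q\<close>])
qed

lemma slope_neg_ramp:
  assumes fin: "finite {p. \<kappa> p \<noteq> 0}"
  shows "slope_neg (ramp c \<sigma> \<kappa>) t = - (of_int \<sigma> + (\<Sum>p | \<kappa> p \<noteq> 0 \<and> p < t. of_int (\<kappa> p)))"
proof -
  define Q where "Q = insert (t - 1) {p. \<kappa> p \<noteq> 0 \<and> p < t}"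
  have Q: "finite Q" "Q \<noteq> {}" using fin by (auto simp: Q_def)
  have "Max Q < t" using Q by (auto simp: Q_def)
  moreover have gap: "p \<le> Max Q \<or> t \<le> p" if "\<kappa> p \<noteq> 0" for p
    using Q that by (cases "p < t") (auto simp: Q_def)
  moreover have "{p. \<kappa> p \<noteq> 0 \<and> p \<le> Max Q} = {p. \<kappa> p \<noteq> 0 \<and> p < t}"
    using gap \<open>Max Q < t\<close> by force
  ultimately have "\<forall>s\<in>{Max Q..t}. ramp c \<sigma> \<kappa> s
      = (of_int \<sigma> + (\<Sum>p | \<kappa> p \<noteq> 0 \<and> p < t. of_int (\<kappa> p))) * s
        + (c - (\<Sum>p | \<kappa> p \<noteq> 0 \<and> p < t. of_int (\<kappa> p) * p))"
    using fin ramp_affine_between[of \<kappa> "Max Q" t] by auto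
  then show ?thesis
    by (rule slope_neg_affine[OF \<open>Max Q < t\<close>])
qed

lemma kink_ramp:
  assumes fin: "finite {p. \<kappa> p \<noteq> 0}"
  shows "kink (ramp c \<sigma> \<kappa>) t = of_int (\<kappa> t)"
proof -
  have "(\<Sum>p | \<kappa> p \<noteq> 0 \<and> p \<le> t. of_int (\<kappa> p)) = (\<Sum>p | \<kappa> p \<noteq> 0 \<and> p < t. of_int (\<kappa> p)) + (of_int (\<kappa> t) :: real)"
  proof (cases "\<kappa> t = 0")
    case True
    then have "{p. \<kappa> p \<noteq> 0 \<and> p \<le> t} = {p. \<kappa> p \<noteq> 0 \<and> p < t}" by (auto simp: le_less)
    then show ?thesis using True by simp
  next
    case False
    then have "{p. \<kappa> p \<noteq> 0 \<and> p \<le> t} = insert t {p. \<kappa> p \<noteq> 0 \<and> p < t}" by force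
    then show ?thesis using fin by simp
  qed
  then show ?thesis
    using fin by (simp add: kink_def slope_pos_ramp slope_neg_ramp)
qed

lemma sum_support_superset:
  fixes a :: "'a \<Rightarrow> int" and g :: "'a \<Rightarrow> real"
  assumes "finite S" "{x. a x \<noteq> 0} \<subseteq> S"
  shows "(\<Sum>x | a x \<noteq> 0. of_int (a x) * g x) = (\<Sum>x\<in>S. of_int (a x) * g x)"
  using assms by (intro sum.mono_neutral_left) auto

lemma ceiling_minus_floor: "\<lceil>x\<rceil> - \<lfloor>x\<rfloor> = (if frac x = 0 then 0 else 1)"
  by (simp add: ceiling_altdef frac_def)

(* Rounding the slope q up to the integer \<lceil>q\<rceil> is compensated over [0, L] by one extra kink
of -1 at frac q * L (none if q is an integer). *)
definition round_kinks :: "real \<Rightarrow> real \<Rightarrow> (real \<Rightarrow> int) \<Rightarrow> real \<Rightarrow> int" where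
  "round_kinks L q a t = a t - (if t = frac q * L then \<lceil>q\<rceil> - \<lfloor>q\<rfloor> else 0)"

lemma round_kinks_support: "{t. round_kinks L q a t \<noteq> 0} \<subseteq> insert (frac q * L) {t. a t \<noteq> 0}"
  by (auto simp: round_kinks_def)

lemma round_kinks_inside:
  assumes "0 < L" and a: "\<And>t. a t \<noteq> 0 \<Longrightarrow> 0 < t \<and> t < L" and "round_kinks L q a t \<noteq> 0"
  shows "0 < t \<and> t < L"
proof (cases "a t = 0")
  case True
  then have "t = frac q * L" "frac q \<noteq> 0"
    using assms(3) by (auto simp: round_kinks_def ceiling_minus_floor split: if_splits)
  then show ?thesis
    using \<open>0 < L\<close> frac_lt_1[of q] frac_ge_0[of q] by (simp add: less_le)
qed (use a in blast)

lemma deg_round_kinks: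
  assumes "finite {t. a t \<noteq> 0}"
  shows "deg (round_kinks L q a) = deg a - (\<lceil>q\<rceil> - \<lfloor>q\<rfloor>)"
  using assms deg_single[of "frac q * L" "\<lceil>q\<rceil> - \<lfloor>q\<rfloor>"] unfolding round_kinks_def
  by (subst deg_diff) (auto intro: finite_subset[of _ "{frac q * L}"])

lemma ramp_round_kinks:
  assumes "0 < L" and fin: "finite {t. a t \<noteq> 0}" and a: "\<And>t. a t \<noteq> 0 \<Longrightarrow> 0 < t \<and> t < L"
  shows "ramp c \<lceil>q\<rceil> (round_kinks L q a) L = c + q * L + (\<Sum>t | a t \<noteq> 0. of_int (a t) * (L - t))"
proof -
  define \<rho> where "\<rho> = frac q * L"
  define S where "S = insert \<rho> {t. a t \<noteq> 0}"
  have "finite S" using fin by (simp add: S_def)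
  have inside: "round_kinks L q a t \<noteq> 0 \<Longrightarrow> t < L" for t
    using round_kinks_inside[OF \<open>0 < L\<close> a] by blast
  have "(\<Sum>p | round_kinks L q a p \<noteq> 0. of_int (round_kinks L q a p) * max 0 (L - p))
      = (\<Sum>p | round_kinks L q a p \<noteq> 0. of_int (round_kinks L q a p) * (L - p))"
    using inside by (intro sum.cong) auto
  also have "\<dots> = (\<Sum>p\<in>S. of_int (round_kinks L q a p) * (L - p))"
    using \<open>finite S\<close> round_kinks_support by (intro sum_support_superset) (auto simp: S_def \<rho>_def)
  also have "\<dots> = (\<Sum>p\<in>S. of_int (a p) * (L - p))
      - (\<Sum>p\<in>S. if p = \<rho> then of_int (\<lceil>q\<rceil> - \<lfloor>q\<rfloor>) * (L - p) else 0)"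
    unfolding sum_subtractf[symmetric] by (intro sum.cong) (auto simp: round_kinks_def \<rho>_def left_diff_distrib)
  also have "(\<Sum>p\<in>S. if p = \<rho> then of_int (\<lceil>q\<rceil> - \<lfloor>q\<rfloor>) * (L - p) else 0)
      = of_int (\<lceil>q\<rceil> - \<lfloor>q\<rfloor>) * (L - \<rho>)"
    using \<open>finite S\<close> by (simp add: S_def)
  also have "(\<Sum>p\<in>S. of_int (a p) * (L - p)) = (\<Sum>t | a t \<noteq> 0. of_int (a t) * (L - t))"
    using \<open>finite S\<close> by (intro sum_support_superset[symmetric]) (auto simp: S_def)
  finally have "ramp c \<lceil>q\<rceil> (round_kinks L q a) L
      = c + (\<lfloor>q\<rfloor> + (\<lceil>q\<rceil> - \<lfloor>q\<rfloor>) * frac q) * L + (\<Sum>t | a t \<noteq> 0. of_int (a t) * (L - t))"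
    by (simp add: ramp_def \<rho>_def algebra_simps)
  also have "\<lfloor>q\<rfloor> + (\<lceil>q\<rceil> - \<lfloor>q\<rfloor>) * frac q = q"
    by (simp add: ceiling_minus_floor frac_def)
  finally show ?thesis .
qed

definition ramp_fun ::
  "('e \<Rightarrow> 'v) \<Rightarrow> ('v \<Rightarrow> real) \<Rightarrow> ('e \<Rightarrow> int) \<Rightarrow> ('e \<Rightarrow> real \<Rightarrow> int) \<Rightarrow> ('v, 'e) pt \<Rightarrow> real" where
  "ramp_fun src h \<sigma> \<kappa> x = (case x of Vert v \<Rightarrow> h v | Inner e t \<Rightarrow> ramp (h (src e)) (\<sigma> e) (\<kappa> e) t)"

locale ramp_potential = metric_graph V E src tgt len
  for V :: "'v set" and E :: "'e set" and src tgt :: "'e \<Rightarrow> 'v" and len :: "'e \<Rightarrow> real" +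
  fixes h :: "'v \<Rightarrow> real" and \<sigma> :: "'e \<Rightarrow> int" and \<kappa> :: "'e \<Rightarrow> real \<Rightarrow> int"
  assumes finite_kinks: "e \<in> E \<Longrightarrow> finite {t. \<kappa> e t \<noteq> 0}"
    and kinks_inside: "e \<in> E \<Longrightarrow> \<kappa> e t \<noteq> 0 \<Longrightarrow> 0 < t \<and> t < len e"
    and ramp_reaches_tgt: "e \<in> E \<Longrightarrow> ramp (h (src e)) (\<sigma> e) (\<kappa> e) (len e) = h (tgt e)"
begin

lemma ramp_fun_emb:
  assumes "e \<in> E" "0 \<le> t" "t \<le> len e"
  shows "ramp_fun src h \<sigma> \<kappa> (emb src tgt len e t) = ramp (h (src e)) (\<sigma> e) (\<kappa> e) t"
proof -
  have "ramp (h (src e)) (\<sigma> e) (\<kappa> e) 0 = h (src e)"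
    using kinks_inside[OF assms(1)] by (auto simp: ramp_def intro!: sum.neutral)
  then show ?thesis
    using assms ramp_reaches_tgt by (auto simp: emb_def ramp_fun_def)
qed

lemma is_PL_ramp_fun: "is_PL E src tgt len (ramp_fun src h \<sigma> \<kappa>)"
  unfolding is_PL_def
proof
  fix e assume e: "e \<in> E"
  define S where "S = insert 0 (insert (len e) {t. \<kappa> e t \<noteq> 0})"
  show "pw_affine_int (len e) (\<lambda>t. ramp_fun src h \<sigma> \<kappa> (emb src tgt len e t))"
  proof (rule pw_affine_int_if_affine_between)
    show "finite S" "0 \<in> S" "len e \<in> S" "S \<subseteq> {0..len e}" "0 < len e"
      using e finite_kinks kinks_inside len_pos by (force simp: S_def)+
    fix a b assume ab: "a \<in> S" "b \<in> S" "a < b" and gap: "\<And>s. s \<in> S \<Longrightarrow> s \<le> a \<or> b \<le> s"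
    define m where "m = \<sigma> e + (\<Sum>p | \<kappa> e p \<noteq> 0 \<and> p \<le> a. \<kappa> e p)"
    have "\<forall>t\<in>{a..b}. ramp_fun src h \<sigma> \<kappa> (emb src tgt len e t)
        = of_int m * t + (h (src e) - (\<Sum>p | \<kappa> e p \<noteq> 0 \<and> p \<le> a. of_int (\<kappa> e p) * p))"
    proof
      fix t assume t: "t \<in> {a..b}"
      have "0 \<le> a" "b \<le> len e"
        using ab \<open>S \<subseteq> {0..len e}\<close> by auto
      then show "ramp_fun src h \<sigma> \<kappa> (emb src tgt len e t)
        = of_int m * t + (h (src e) - (\<Sum>p | \<kappa> e p \<noteq> 0 \<and> p \<le> a. of_int (\<kappa> e p) * p))"
        using e t gap finite_kinks[OF e]
        by (subst ramp_fun_emb) (auto simp: m_def S_def intro!: ramp_affine_between)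
    qed
    then show "\<exists>m::int. \<exists>c. \<forall>t\<in>{a..b}. ramp_fun src h \<sigma> \<kappa> (emb src tgt len e t) = of_int m * t + c"
      by blast
  qed
qed

lemma ramp_fun_slopes:
  assumes e: "e \<in> E"
  defines "g \<equiv> \<lambda>t. ramp_fun src h \<sigma> \<kappa> (emb src tgt len e t)"
  shows "slope_pos g 0 = of_int (\<sigma> e)"
    and "slope_neg g (len e) = - of_int (\<sigma> e + deg (\<kappa> e))"
    and "0 < t \<Longrightarrow> t < len e \<Longrightarrow> kink g t = of_int (\<kappa> e t)"
proof -
  let ?r = "ramp (h (src e)) (\<sigma> e) (\<kappa> e)"
  have agree: "\<forall>s\<in>{0..len e}. g s = ?r s"
    using e by (simp add: g_def ramp_fun_emb)
  have L: "0 < len e" using len_pos[OF e] .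
  have fin: "finite {t. \<kappa> e t \<noteq> 0}" using finite_kinks[OF e] .
  have "slope_pos g 0 = slope_pos ?r 0"
    using L agree by (intro slope_pos_cong) auto
  also have "\<dots> = of_int (\<sigma> e)"
  proof -
    have no_kinks: "{p. \<kappa> e p \<noteq> 0 \<and> p \<le> 0} = {}"
      using kinks_inside[OF e] by force
    show ?thesis
      unfolding slope_pos_ramp[OF fin] no_kinks by simp
  qed
  finally show "slope_pos g 0 = of_int (\<sigma> e)" .
  have "slope_neg g (len e) = slope_neg ?r (len e)"
    using L agree by (intro slope_neg_cong) auto
  also have "\<dots> = - of_int (\<sigma> e + deg (\<kappa> e))"
  proof -
    have "{p. \<kappa> e p \<noteq> 0 \<and> p < len e} = {p. \<kappa> e p \<noteq> 0}"
      using kinks_inside[OF e] by blast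
    then show ?thesis
      using fin by (simp add: slope_neg_ramp deg_def)
  qed
  finally show "slope_neg g (len e) = - of_int (\<sigma> e + deg (\<kappa> e))" .
  assume t: "0 < t" "t < len e"
  have "slope_pos g t = slope_pos ?r t"
    using t agree by (intro slope_pos_cong[where b = "len e"]) auto
  moreover have "slope_neg g t = slope_neg ?r t"
    using t agree by (intro slope_neg_cong[where a = 0]) auto
  ultimately have "kink g t = kink ?r t"
    by (simp add: kink_def)
  then show "kink g t = of_int (\<kappa> e t)"
    using fin by (simp add: kink_ramp)
qed

lemma divf_ramp_fun_Vert:
  assumes "v \<in> V"
  shows "divf V E src tgt len (ramp_fun src h \<sigma> \<kappa>) (Vert v)
      = (\<Sum>e\<in>{e\<in>E. tgt e = v}. of_int (\<sigma> e + deg (\<kappa> e))) - (\<Sum>e\<in>{e\<in>E. src e = v}. of_int (\<sigma> e))"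
  using assms ramp_fun_slopes(1,2) by (simp add: divf_def sum_negf sum_subtractf sum.distrib)

lemma divf_ramp_fun_Inner:
  assumes "e \<in> E" "0 < t" "t < len e"
  shows "divf V E src tgt len (ramp_fun src h \<sigma> \<kappa>) (Inner e t) = - of_int (\<kappa> e t)"
  using assms ramp_fun_slopes(3)[of e t] by (simp add: divf_def kink_def)

lemma linsys_nonempty_if_ramp_shift_effective:
  assumes D: "is_divisor V E len D"
    and vertex_nonneg: "\<And>v. v \<in> V \<Longrightarrow>
          0 \<le> D (Vert v) + (\<Sum>e\<in>{e\<in>E. tgt e = v}. \<sigma> e + deg (\<kappa> e)) - (\<Sum>e\<in>{e\<in>E. src e = v}. \<sigma> e)"
    and inner_nonneg: "\<And>e t. e \<in> E \<Longrightarrow> 0 < t \<Longrightarrow> t < len e \<Longrightarrow> \<kappa> e t \<le> D (Inner e t)"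
  shows "linsys_nonempty V E src tgt len D"
proof -
  \<comment> \<open>D plus the divisor of the ramp function\<close>
  define D' where "D' x = (if x \<notin> points V E len then 0 else
      case x of Vert v \<Rightarrow> D (Vert v) + (\<Sum>e\<in>{e\<in>E. tgt e = v}. \<sigma> e + deg (\<kappa> e)) - (\<Sum>e\<in>{e\<in>E. src e = v}. \<sigma> e)
              | Inner e t \<Rightarrow> D (Inner e t) - \<kappa> e t)" for x
  have "{x. D' x \<noteq> 0} \<subseteq> Vert ` V \<union> (\<Union>e\<in>E. Inner e ` ({t. D (Inner e t) \<noteq> 0} \<union> {t. \<kappa> e t \<noteq> 0}))"
  proof
    fix x assume x: "x \<in> {x. D' x \<noteq> 0}"
    then have "x \<in> points V E len" by (auto simp: D'_def split: if_splits)
    then show "x \<in> Vert ` V \<union> (\<Union>e\<in>E. Inner e ` ({t. D (Inner e t) \<noteq> 0} \<union> {t. \<kappa> e t \<noteq> 0}))"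
      using x by (cases x) (force simp: D'_def)+
  qed
  moreover have "finite (Vert ` V \<union> (\<Union>e\<in>E. Inner e ` ({t. D (Inner e t) \<noteq> 0} \<union> {t. \<kappa> e t \<noteq> 0})))"
    using D finite_V finite_E finite_kinks finite_support_Inner[of D] by (auto simp: is_divisor_def)
  ultimately have "finite {x. D' x \<noteq> 0}"
    by (rule finite_subset)
  moreover have "{x. D' x \<noteq> 0} \<subseteq> points V E len"
    by (auto simp: D'_def split: if_splits)
  ultimately have "is_divisor V E len D'"
    by (simp add: is_divisor_def)
  moreover have "effective D'"
    unfolding effective_def D'_def using vertex_nonneg inner_nonneg by (auto split: pt.splits)
  moreover have "lin_equiv V E src tgt len D' D"
    unfolding lin_equiv_def
  proof (intro exI conjI ballI)
    show "is_PL E src tgt len (ramp_fun src h \<sigma> \<kappa>)" by (fact is_PL_ramp_fun)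
    fix x assume x: "x \<in> points V E len"
    show "real_of_int (D' x - D x) = divf V E src tgt len (ramp_fun src h \<sigma> \<kappa>) x"
      using x by (cases x) (simp_all add: D'_def divf_ramp_fun_Vert divf_ramp_fun_Inner)
  qed
  ultimately show ?thesis
    unfolding linsys_nonempty_def by blast
qed

end

section \<open>The Laplace equation on a connected weighted graph\<close>

(* Connectivity in terms of cuts: this is the form that survives Kron reduction. *)
definition weights_connected :: "'v set \<Rightarrow> ('v \<Rightarrow> 'v \<Rightarrow> real) \<Rightarrow> bool" where
  "weights_connected V w \<longleftrightarrow> (\<forall>S\<subseteq>V. S \<noteq> {} \<longrightarrow> S \<noteq> V \<longrightarrow> (\<exists>a\<in>S. \<exists>c\<in>V - S. 0 < w a c))"

(* Eliminating the vertex z from the Laplace equation (Kron reduction) replaces the weights by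
the Schur complement w a c + w a z * w z c / W, where W is the total weight at z. *)
lemma kron_reduction_connected:
  fixes w :: "'v \<Rightarrow> 'v \<Rightarrow> real"
  assumes conn: "weights_connected (insert z F) w" and z: "z \<notin> F"
    and nonneg: "\<And>a c. a \<in> insert z F \<Longrightarrow> c \<in> insert z F \<Longrightarrow> 0 \<le> w a c" and "0 < W"
  shows "weights_connected F (\<lambda>a c. w a c + w a z * w z c / W)"
  unfolding weights_connected_def
proof (intro allI impI)
  fix S assume S: "S \<subseteq> F" "S \<noteq> {}" "S \<noteq> F"
  have reduced_pos: "0 < w a c + w a z * w z c / W"
    if "a \<in> S" "c \<in> F - S" "0 < w a c \<or> (0 < w a z \<and> 0 < w z c)" for a c
  proof -
    have "0 \<le> w a c" "0 \<le> w a z" "0 \<le> w z c"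
      using that(1,2) S(1) nonneg by auto
    then show ?thesis
      using that(3) \<open>0 < W\<close>
      by (smt (verit) divide_nonneg_pos divide_pos_pos mult_nonneg_nonneg mult_pos_pos)
  qed
  have cut: "\<exists>a\<in>T. \<exists>c\<in>insert z F - T. 0 < w a c"
    if "T \<subseteq> insert z F" "T \<noteq> {}" "T \<noteq> insert z F" for T
    using conn that unfolding weights_connected_def by blast
  show "\<exists>a\<in>S. \<exists>c\<in>F - S. 0 < w a c + w a z * w z c / W"
  proof (cases "\<exists>a\<in>S. 0 < w a z")
    case True
    then obtain a where a: "a \<in> S" "0 < w a z" by blast
    obtain c0 where "c0 \<in> F" "c0 \<notin> S" using S(1,3) by blast
    then have "insert z S \<noteq> insert z F"
      using z by auto
    then obtain a' c where a': "a' \<in> insert z S" and c: "c \<in> F - S" and "0 < w a' c"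
      using cut[of "insert z S"] S(1) by auto
    then consider "a' \<in> S" "0 < w a' c" | "0 < w a z" "0 < w z c"
      using a by auto
    then show ?thesis
      using a c reduced_pos by cases blast+
  next
    case False
    obtain a c where "a \<in> S" "c \<in> insert z F - S" "0 < w a c"
      using cut[of S] S z by auto
    moreover have "c \<noteq> z"
      using False \<open>a \<in> S\<close> \<open>0 < w a c\<close> by auto
    ultimately show ?thesis
      using reduced_pos by blast
  qed
qed

lemma weights_connected_pivot_pos:
  fixes w :: "'v \<Rightarrow> 'v \<Rightarrow> real"
  assumes conn: "weights_connected (insert z F) w" and "finite F" "z \<notin> F" "F \<noteq> {}"
    and nonneg: "\<And>a c. a \<in> insert z F \<Longrightarrow> c \<in> insert z F \<Longrightarrow> 0 \<le> w a c"
  shows "0 < (\<Sum>u\<in>F. w z u)"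
proof -
  have "{z} \<noteq> insert z F" using assms(3,4) by blast
  then have "\<exists>a\<in>{z}. \<exists>c\<in>insert z F - {z}. 0 < w a c"
    using conn unfolding weights_connected_def by blast
  then obtain c where "c \<in> F" "0 < w z c"
    using assms(3) by auto
  moreover have "w z c \<le> (\<Sum>u\<in>F. w z u)"
    using \<open>finite F\<close> nonneg \<open>c \<in> F\<close> by (intro member_le_sum) auto
  ultimately show ?thesis by linarith
qed

lemma kron_reduction_lift:
  fixes w :: "'v \<Rightarrow> 'v \<Rightarrow> real"
  assumes "finite F" "z \<notin> F" and W: "W = (\<Sum>u\<in>F. w z u)" "0 < W"
    and h: "\<And>v. v \<in> F \<Longrightarrow> (\<Sum>u\<in>F. (w v u + w v z * w z u / W) * (h v - h u)) = b v + w v z * b z / W"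
  shows "\<exists>h'. \<forall>v\<in>insert z F. (\<Sum>u\<in>insert z F. w v u * (h' v - h' u)) = b v"
proof (intro exI ballI)
  define S where "S = (\<Sum>u\<in>F. w z u * h u)"
  define h' where "h' = h(z := (b z + S) / W)"
  have "W \<noteq> 0" using \<open>0 < W\<close> by simp
  then have h'_z: "W * h' z = b z + S" by (simp add: h'_def)
  have h'_F: "h' u = h u" if "u \<in> F" for u using that \<open>z \<notin> F\<close> by (auto simp: h'_def)
  have row_z_sum: "(\<Sum>u\<in>F. w z u * (x - h u)) = W * x - S" for x
    by (simp add: W S_def right_diff_distrib sum_subtractf sum_distrib_right)
  fix v assume "v \<in> insert z F"
  then consider "v = z" | "v \<in> F" by blast
  then show "(\<Sum>u\<in>insert z F. w v u * (h' v - h' u)) = b v"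
  proof cases
    case 1
    then show ?thesis
      using assms(1,2) h'_z h'_F row_z_sum by simp
  next
    case 2
    have "(w v u + w v z * w z u / W) * (h v - h u) = w v u * (h v - h u) + w v z / W * (w z u * (h v - h u))"
      for u by (simp add: ring_distribs)
    then have "(\<Sum>u\<in>F. (w v u + w v z * w z u / W) * (h v - h u))
        = (\<Sum>u\<in>F. w v u * (h v - h u)) + w v z / W * (W * h v - S)"
      by (simp add: sum.distrib row_z_sum flip: sum_divide_distrib sum_distrib_left)
    also have "W * h v - S = W * (h v - h' z) + b z"
      using h'_z by (simp add: algebra_simps)
    finally have "(\<Sum>u\<in>F. w v u * (h v - h u)) + w v z * (h v - h' z) = b v"
      using h[OF 2] \<open>W \<noteq> 0\<close> by (simp add: ring_distribs)
    then show ?thesis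
      using assms(1,2) 2 h'_F by (simp add: add.commute)
  qed
qed

lemma laplacian_solvable:
  fixes w :: "'v \<Rightarrow> 'v \<Rightarrow> real"
  assumes "finite V"
    and sym: "\<And>u v. u \<in> V \<Longrightarrow> v \<in> V \<Longrightarrow> w u v = w v u"
    and nonneg: "\<And>u v. u \<in> V \<Longrightarrow> v \<in> V \<Longrightarrow> 0 \<le> w u v"
    and conn: "weights_connected V w" and balanced: "(\<Sum>v\<in>V. b v) = 0"
  shows "\<exists>h. \<forall>v\<in>V. (\<Sum>u\<in>V. w v u * (h v - h u)) = b v"
  using assms
proof (induction V arbitrary: w b rule: finite_induct)
  case empty
  then show ?case by simp
next
  case (insert z F)
  show ?case
  proof (cases "F = {}")
    case True
    then show ?thesis using insert.prems(4) by simp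
  next
    case False
    define W where "W = (\<Sum>u\<in>F. w z u)"
    have "0 < W"
      unfolding W_def using insert.prems(3) insert.hyps False insert.prems(2)
      by (rule weights_connected_pivot_pos)
    define w' where "w' a c = w a c + w a z * w z c / W" for a c
    define b' where "b' a = b a + w a z * b z / W" for a
    have "(\<Sum>v\<in>F. b' v) = (\<Sum>v\<in>F. b v) + (\<Sum>v\<in>F. w z v) * b z / W"
      using insert.prems(1)
      by (simp add: b'_def sum.distrib sum_divide_distrib[symmetric] sum_distrib_right)
    also have "\<dots> = 0"
      using insert.prems(4) insert.hyps \<open>0 < W\<close> by (simp add: W_def add.commute)
    finally have "(\<Sum>v\<in>F. b' v) = 0" .
    moreover have "weights_connected F w'"
      unfolding w'_def
      using insert.prems(3) insert.hyps(2) insert.prems(2) \<open>0 < W\<close> by (rule kron_reduction_connected)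
    moreover have "w' u v = w' v u" if "u \<in> F" "v \<in> F" for u v
      using that insert.prems(1) by (simp add: w'_def mult.commute)
    moreover have "0 \<le> w' u v" if "u \<in> F" "v \<in> F" for u v
      using that insert.prems(2) \<open>0 < W\<close> by (simp add: w'_def)
    ultimately obtain h where "\<forall>v\<in>F. (\<Sum>u\<in>F. w' v u * (h v - h u)) = b' v"
      using insert.IH[of w' b'] by blast
    then show ?thesis
      using insert.hyps \<open>0 < W\<close> W_def
      by (intro kron_reduction_lift) (auto simp: w'_def b'_def)
  qed
qed

definition conductance :: "'e set \<Rightarrow> ('e \<Rightarrow> 'v) \<Rightarrow> ('e \<Rightarrow> 'v) \<Rightarrow> ('e \<Rightarrow> real) \<Rightarrow> 'v \<Rightarrow> 'v \<Rightarrow> real" where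
  "conductance E src tgt len a c =
     (\<Sum>e\<in>{e\<in>E. src e = a \<and> tgt e = c}. 1 / len e) + (\<Sum>e\<in>{e\<in>E. src e = c \<and> tgt e = a}. 1 / len e)"

definition inflow :: "'e set \<Rightarrow> ('e \<Rightarrow> 'v) \<Rightarrow> ('e \<Rightarrow> 'v) \<Rightarrow> ('e \<Rightarrow> real) \<Rightarrow> 'v \<Rightarrow> real" where
  "inflow E src tgt g v = (\<Sum>e\<in>{e\<in>E. tgt e = v}. g e) - (\<Sum>e\<in>{e\<in>E. src e = v}. g e)"

lemma inflow_diff: "inflow E src tgt (\<lambda>e. f e - g e) v = inflow E src tgt f v - inflow E src tgt g v"
  by (simp add: inflow_def sum_subtractf)

context metric_graph
begin

lemma sum_inflow: "(\<Sum>v\<in>V. inflow E src tgt g v) = 0"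
  by (simp add: inflow_def sum_subtractf sum_over_src sum_over_tgt)

lemma conductance_nonneg: "0 \<le> conductance E src tgt len a c"
  unfolding conductance_def by (intro add_nonneg_nonneg sum_nonneg) (auto dest: len_pos)

lemma conductance_pos:
  assumes "e \<in> E"
  shows "0 < conductance E src tgt len (src e) (tgt e)"
proof -
  have "1 / len e \<le> (\<Sum>e'\<in>{e'\<in>E. src e' = src e \<and> tgt e' = tgt e}. 1 / len e')"
    using assms finite_E by (intro member_le_sum) (auto dest: len_pos)
  moreover have "0 \<le> (\<Sum>e'\<in>{e'\<in>E. src e' = tgt e \<and> tgt e' = src e}. 1 / len e')"
    by (intro sum_nonneg) (auto dest: len_pos)
  moreover have "0 < 1 / len e" using len_pos[OF assms] by simp
  ultimately show ?thesis
    unfolding conductance_def by linarith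
qed

lemma conductance_sym: "conductance E src tgt len a c = conductance E src tgt len c a"
  by (simp add: conductance_def add.commute)

lemma inflow_potential_eq_laplacian:
  "inflow E src tgt (\<lambda>e. (h (tgt e) - h (src e)) / len e) v
     = (\<Sum>u\<in>V. conductance E src tgt len v u * (h v - h u))"
proof -
  have group: "(\<Sum>u\<in>V. \<Sum>e\<in>{e\<in>E. s e = v \<and> t e = u}. f e u) = (\<Sum>e\<in>{e\<in>E. s e = v}. f e (t e))"
    if "\<And>e. e \<in> E \<Longrightarrow> t e \<in> V" for s t :: "'e \<Rightarrow> 'v" and f :: "'e \<Rightarrow> 'v \<Rightarrow> real"
  proof -
    have "(\<Sum>u\<in>V. \<Sum>e\<in>{e\<in>E. s e = v \<and> t e = u}. f e u) = (\<Sum>u\<in>V. \<Sum>e\<in>{e\<in>E. s e = v \<and> t e = u}. f e (t e))"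
      by (intro sum.cong) auto
    also have "\<dots> = (\<Sum>e\<in>{e\<in>E. s e = v}. f e (t e))"
      using sum.group[of "{e\<in>E. s e = v}" V t "\<lambda>e. f e (t e)"] finite_V finite_E that
      by (auto simp: conj_ac)
    finally show ?thesis .
  qed
  have "(\<Sum>u\<in>V. conductance E src tgt len v u * (h v - h u))
      = (\<Sum>u\<in>V. \<Sum>e\<in>{e\<in>E. src e = v \<and> tgt e = u}. (h v - h u) / len e)
        + (\<Sum>u\<in>V. \<Sum>e\<in>{e\<in>E. tgt e = v \<and> src e = u}. (h v - h u) / len e)"
    by (simp add: conductance_def distrib_right sum.distrib sum_distrib_right conj_commute)
  also have "\<dots> = (\<Sum>e\<in>{e\<in>E. src e = v}. (h v - h (tgt e)) / len e)
        + (\<Sum>e\<in>{e\<in>E. tgt e = v}. (h v - h (src e)) / len e)"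
    using src_in_V tgt_in_V by (simp add: group)
  also have "\<dots> = inflow E src tgt (\<lambda>e. (h (tgt e) - h (src e)) / len e) v"
    by (simp add: inflow_def diff_divide_distrib sum_subtractf)
  finally show ?thesis ..
qed

end

locale compact_tropical_curve =
  fixes V :: "'v set" and E :: "'e set" and src tgt :: "'e \<Rightarrow> 'v" and len :: "'e \<Rightarrow> real"
  assumes is_tropical_curve: "tropical_curve V E src tgt len"

sublocale compact_tropical_curve \<subseteq> metric_graph
  using is_tropical_curve by unfold_locales (auto simp: tropical_curve_def)

context compact_tropical_curve
begin

lemma V_nonempty: "V \<noteq> {}"
  using is_tropical_curve by (simp add: tropical_curve_def)

lemma weights_connected_conductance: "weights_connected V (conductance E src tgt len)"
  unfolding weights_connected_def
proof (intro allI impI)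
  fix S assume S: "S \<subseteq> V" "S \<noteq> {}" "S \<noteq> V"
  obtain a c where a: "a \<in> S" and c: "c \<in> V" "c \<notin> S" using S by blast
  let ?R = "{(src e, tgt e) | e. e \<in> E} \<union> {(tgt e, src e) | e. e \<in> E}"
  have "(a, c) \<in> ?R\<^sup>*"
    using is_tropical_curve a c S(1) unfolding tropical_curve_def by blast
  then have "\<exists>x y. (x, y) \<in> ?R \<and> x \<in> S \<and> y \<notin> S"
    using a c(2) by (induction rule: rtrancl_induct) auto
  then obtain e where e: "e \<in> E" and
    crossing: "src e \<in> S \<and> tgt e \<notin> S \<or> tgt e \<in> S \<and> src e \<notin> S"
    by blast
  then show "\<exists>a\<in>S. \<exists>c\<in>V - S. 0 < conductance E src tgt len a c"
    using conductance_pos[OF e] conductance_sym src_in_V[OF e] tgt_in_V[OF e] by fastforce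
qed

lemma exists_potential_with_inflow:
  assumes balanced: "(\<Sum>v\<in>V. b v) = 0"
  shows "\<exists>h. \<forall>v\<in>V. inflow E src tgt (\<lambda>e. (h (tgt e) - h (src e) - \<phi> e) / len e) v = b v"
proof -
  define b' where "b' v = b v + inflow E src tgt (\<lambda>e. \<phi> e / len e) v" for v
  have "(\<Sum>v\<in>V. b' v) = 0"
    using balanced by (simp add: b'_def sum.distrib sum_inflow)
  then obtain h where h: "\<forall>v\<in>V. (\<Sum>u\<in>V. conductance E src tgt len v u * (h v - h u)) = b' v"
    using laplacian_solvable[OF finite_V conductance_sym conductance_nonneg weights_connected_conductance]
    by blast
  have split: "(\<lambda>e. (h (tgt e) - h (src e) - \<phi> e) / len e)
      = (\<lambda>e. (h (tgt e) - h (src e)) / len e - \<phi> e / len e)"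
    by (intro ext) (rule diff_divide_distrib)
  have "inflow E src tgt (\<lambda>e. (h (tgt e) - h (src e) - \<phi> e) / len e) v = b v" if "v \<in> V" for v
    using h that unfolding split inflow_diff inflow_potential_eq_laplacian by (simp add: b'_def)
  then show ?thesis by blast
qed

end

section \<open>Divisors of large degree are equivalent to effective divisors\<close>

definition valence :: "'e set \<Rightarrow> ('e \<Rightarrow> 'v) \<Rightarrow> ('e \<Rightarrow> 'v) \<Rightarrow> 'v \<Rightarrow> nat" where
  "valence E src tgt v = card {e\<in>E. src e = v} + card {e\<in>E. tgt e = v}"

(* The extra rise over e of a ramp that bends by D t at every chip t of D on e. *)
definition edge_moment :: "('e \<Rightarrow> real) \<Rightarrow> (('v, 'e) pt \<Rightarrow> int) \<Rightarrow> 'e \<Rightarrow> real" where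
  "edge_moment len D e = (\<Sum>t | D (Inner e t) \<noteq> 0. of_int (D (Inner e t)) * (len e - t))"

context metric_graph
begin

lemma linsys_nonempty_if_rounded_flow_nonneg:
  assumes D: "is_divisor V E len D"
    and flow: "\<And>v. v \<in> V \<Longrightarrow> real (valence E src tgt v) \<le> D (Vert v)
        + (\<Sum>e\<in>{e\<in>E. tgt e = v}. deg (\<lambda>t. D (Inner e t)))
        + inflow E src tgt (\<lambda>e. (h (tgt e) - h (src e) - edge_moment len D e) / len e) v"
  shows "linsys_nonempty V E src tgt len D"
proof -
  define q where "q = (\<lambda>e. (h (tgt e) - h (src e) - edge_moment len D e) / len e)"
  define \<kappa> where "\<kappa> e = round_kinks (len e) (q e) (\<lambda>t. D (Inner e t))" for e
  have fin_D: "finite {t. D (Inner e t) \<noteq> 0}" for e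
    using D finite_support_Inner by (auto simp: is_divisor_def)
  have D_inside: "0 < t \<and> t < len e" if "e \<in> E" "D (Inner e t) \<noteq> 0" for e t
    using D that by (auto simp: is_divisor_def)
  interpret ramp_potential V E src tgt len h "\<lambda>e. \<lceil>q e\<rceil>" \<kappa>
  proof
    fix e assume e: "e \<in> E"
    show "finite {t. \<kappa> e t \<noteq> 0}"
      using finite_subset[OF round_kinks_support] fin_D by (simp add: \<kappa>_def)
    show "\<kappa> e t \<noteq> 0 \<Longrightarrow> 0 < t \<and> t < len e" for t
      using round_kinks_inside[OF len_pos[OF e] D_inside[OF e]] by (simp add: \<kappa>_def)
    show "ramp (h (src e)) \<lceil>q e\<rceil> (\<kappa> e) (len e) = h (tgt e)"
      using ramp_round_kinks[OF len_pos[OF e] fin_D D_inside[OF e]] len_pos[OF e]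
      by (simp add: \<kappa>_def q_def edge_moment_def)
  qed
  show ?thesis
  proof (rule linsys_nonempty_if_ramp_shift_effective[OF D])
    show "\<kappa> e t \<le> D (Inner e t)" for e t
      by (simp add: \<kappa>_def round_kinks_def ceiling_minus_floor)
    fix v assume v: "v \<in> V"
    have "D (Vert v) + (\<Sum>e\<in>{e\<in>E. tgt e = v}. deg (\<lambda>t. D (Inner e t))) + inflow E src tgt q v
          - real (valence E src tgt v)
        = D (Vert v) + (\<Sum>e\<in>{e\<in>E. tgt e = v}. q e - 1 + deg (\<lambda>t. D (Inner e t)))
          - (\<Sum>e\<in>{e\<in>E. src e = v}. q e + 1)"
      by (simp add: inflow_def valence_def sum.distrib sum_subtractf)
    also have "\<dots> \<le> D (Vert v) + (\<Sum>e\<in>{e\<in>E. tgt e = v}. \<lfloor>q e\<rfloor> + deg (\<lambda>t. D (Inner e t)))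
          - (\<Sum>e\<in>{e\<in>E. src e = v}. \<lceil>q e\<rceil>)"
      using sum_mono[of "{e\<in>E. tgt e = v}" "\<lambda>e. q e - 1 + deg (\<lambda>t. D (Inner e t))"
          "\<lambda>e. real_of_int (\<lfloor>q e\<rfloor> + deg (\<lambda>t. D (Inner e t)))"]
        sum_mono[of "{e\<in>E. src e = v}" "\<lambda>e. real_of_int \<lceil>q e\<rceil>" "\<lambda>e. q e + 1"]
      by (simp add: of_int_ceiling_le_add_one real_of_int_floor_gt_diff_one less_imp_le)
    also have "\<dots> = real_of_int (D (Vert v) + (\<Sum>e\<in>{e\<in>E. tgt e = v}. \<lceil>q e\<rceil> + deg (\<kappa> e))
          - (\<Sum>e\<in>{e\<in>E. src e = v}. \<lceil>q e\<rceil>))"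
      using fin_D by (simp add: \<kappa>_def deg_round_kinks add.commute)
    finally show "0 \<le> D (Vert v) + (\<Sum>e\<in>{e\<in>E. tgt e = v}. \<lceil>q e\<rceil> + deg (\<kappa> e))
          - (\<Sum>e\<in>{e\<in>E. src e = v}. \<lceil>q e\<rceil>)"
      using flow[OF v, folded q_def] by linarith
  qed
qed

end

context compact_tropical_curve
begin

lemma linsys_nonempty_if_deg_ge:
  assumes D: "is_divisor V E len D" and big: "2 * int (card E) \<le> deg D"
  shows "linsys_nonempty V E src tgt len D"
proof -
  define s where "s = (deg D - 2 * card E) / card V"
  define b where "b v = valence E src tgt v - D (Vert v) - (\<Sum>e\<in>{e\<in>E. tgt e = v}. deg (\<lambda>t. D (Inner e t))) + s"
    for v
  have "card V > 0" using finite_V V_nonempty by (simp add: card_gt_0_iff)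
  then have "0 \<le> s" using big by (simp add: s_def)
  have "(\<Sum>v\<in>V. b v) = 0"
  proof -
    have "(\<Sum>v\<in>V. real (valence E src tgt v)) = 2 * card E"
      using sum_over_src[of "\<lambda>_. 1::real"] sum_over_tgt[of "\<lambda>_. 1::real"]
      by (simp add: valence_def sum.distrib)
    moreover have "(\<Sum>v\<in>V. D (Vert v)) + (\<Sum>v\<in>V. \<Sum>e\<in>{e\<in>E. tgt e = v}. deg (\<lambda>t. D (Inner e t))) = deg D"
      using deg_split[OF D] by (simp add: sum_over_tgt)
    moreover have "(\<Sum>v\<in>V. s) = deg D - 2 * card E"
      using \<open>card V > 0\<close> by (simp add: s_def)
    ultimately show ?thesis
      by (simp add: b_def sum.distrib sum_subtractf flip: of_int_sum)
  qed
  then obtain h where "\<forall>v\<in>V. inflow E src tgt (\<lambda>e. (h (tgt e) - h (src e) - edge_moment len D e) / len e) v = b v"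
    using exists_potential_with_inflow by blast
  then show ?thesis
    using \<open>0 \<le> s\<close> by (intro linsys_nonempty_if_rounded_flow_nonneg[OF D, of h]) (simp add: b_def)
qed

end

context compact_tropical_curve
begin

lemma BN_rank_ge:
  assumes D: "is_divisor V E len D" and nonempty: "linsys_nonempty V E src tgt len D"
    and k: "\<And>F. is_divisor V E len F \<Longrightarrow> effective F \<Longrightarrow> deg F = int k
              \<Longrightarrow> linsys_nonempty V E src tgt len (\<lambda>x. D x - F x)"
  shows "int k \<le> BN_rank V E src tgt len D"
proof -
  define P where "P = (\<lambda>d. \<forall>F. is_divisor V E len F \<and> effective F \<and> deg F = int d
                 \<longrightarrow> linsys_nonempty V E src tgt len (\<lambda>x. D x - F x))"
  have bounded: "d \<le> nat (deg D)" if "P d" for d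
  proof -
    obtain v0 where "v0 \<in> V" using V_nonempty by blast
    define F :: "('v, 'e) pt \<Rightarrow> int" where "F = (\<lambda>x. if x = Vert v0 then int d else 0)"
    have F: "is_divisor V E len F" "effective F" "deg F = int d"
      using \<open>v0 \<in> V\<close> deg_single[of "Vert v0" "int d"]
      by (auto simp: is_divisor_def effective_def F_def intro: finite_subset[of _ "{Vert v0}"])
    then have "0 \<le> deg (\<lambda>x. D x - F x)"
      using that D by (intro deg_nonneg_if_linsys_nonempty is_divisor_diff) (auto simp: P_def)
    then show ?thesis
      using D F by (simp add: deg_diff is_divisor_def)
  qed
  have "P k" using k by (simp add: P_def)
  then have "k \<le> Greatest P"
    using bounded by (rule Greatest_le_nat)
  then show ?thesis
    using nonempty by (simp add: BN_rank_def P_def)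
qed

lemma BN_rank_ge_deg_minus_twice_edges:
  assumes D: "is_divisor V E len D"
  shows "deg D - 2 * int (card E) \<le> BN_rank V E src tgt len D"
proof (cases "2 * int (card E) \<le> deg D")
  case True
  have "int (nat (deg D - 2 * int (card E))) \<le> BN_rank V E src tgt len D"
  proof (rule BN_rank_ge[OF D linsys_nonempty_if_deg_ge[OF D True]])
    fix F assume F: "is_divisor V E len F" "effective F" "deg F = int (nat (deg D - 2 * int (card E)))"
    then have "deg (\<lambda>x. D x - F x) = 2 * int (card E)"
      using D True by (simp add: deg_diff is_divisor_def)
    then show "linsys_nonempty V E src tgt len (\<lambda>x. D x - F x)"
      using D F by (intro linsys_nonempty_if_deg_ge is_divisor_diff) auto
  qed
  then show ?thesis using True by simp
next
  case False
  then show ?thesis by (simp add: BN_rank_def)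
qed

end

theorem proposition3p3:
  fixes V :: "'v set" and E :: "'e set" and src tgt :: "'e \<Rightarrow> 'v" and len :: "'e \<Rightarrow> real"
  assumes "tropical_curve V E src tgt len"
  shows "\<exists>c :: nat. \<forall>D. is_divisor V E len D \<longrightarrow>
           BN_rank V E src tgt len D \<ge> deg D - int c"
proof -
  interpret compact_tropical_curve V E src tgt len
    using assms by unfold_locales
  show ?thesis
    using BN_rank_ge_deg_minus_twice_edges by (intro exI[of _ "2 * card E"]) simp
qed

end
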